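(* Let $(a_n)$ be a strictly decreasing sequence of positive reals with $a_n\to0$, let $d>1$, and define $$\alpha_n:=\frac1n\sum_{m\ge1,\,m\ne n}\ln|1-a_m/a_n|\in[-\infty,\infty).$$ 1. If $(n^da_n)$ is eventually monotonically increasing, then $\limsup_{n\to\infty}\alpha_n\le\zeta(d)$. 2. If $(n^da_n)$ is eventually monotonically decreasing, then $\liminf_{n\to\infty}\alpha_n\ge\zeta(d)$.
   Context: $\zeta(d):=\int_0^1\ln(1/z^d-1)\,dz+\int_1^\infty\ln(1-1/z^d)\,dz$ for $d>1$. A real sequence is eventually monotonically increasing (decreasing) if it is monotonically increasing (decreasing) from some index on. *)

theory Defs
  imports "HOL-Analysis.Analysis"
begin

definition zeta_d :: "real \<Rightarrow> real" where
  "zeta_d d = (LBINT z:{0<..<1}. ln (1 / z powr d - 1)) + (LBINT z:{1<..}. ln (1 - 1 / z powr d))"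

text \<open>alpha_n = (1/n) * sum over m >= 1, m ~= n of ln|1 - a_m/a_n|, as an extended real in [-inf, inf).
  The finitely many terms with m < n are summed directly; the terms with m > n are
  nonpositive (for a strictly decreasing positive sequence), so their sum is
  minus the (extended-real) sum of the nonnegative numbers -ln|1 - a_m/a_n|.\<close>
definition alpha :: "(nat \<Rightarrow> real) \<Rightarrow> nat \<Rightarrow> ereal" where
  "alpha a n = ereal (1 / real n) *
     (ereal (\<Sum>m\<in>{1..<n}. ln \<bar>1 - a m / a n\<bar>)
      - (\<Sum>k. ereal (- ln \<bar>1 - a (n + Suc k) / a n\<bar>)))"

end

(*
  Put phi(x) = ln |1 - x powr -d| (this is zeta_integrand d x), so that zeta(d) is the integral
  of phi over (0,1) and (1,oo).
  If n^d a_n is monotone from N on, then for N <= m, n with m ~= n the ratio a_m / a_n lies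
  between 1 and (n/m)^d, so each term ln |1 - a_m / a_n| of n * alpha_n is bounded by phi(m/n),
  from above if n^d a_n increases and from below if it decreases. As phi decreases on (0,1) and
  increases on (1,oo), the sum (1/n) * sum_m phi(m/n) is a Riemann sum squeezed between integrals
  of phi over intervals exhausting (0,1) and (1,oo). The finitely many terms with m < N change
  n * alpha_n by O(ln n): in the increasing case because a_n >= c * n^-d, in the decreasing case
  because eventually a_m >= 2 a_n while phi(m/n) <= d ln n.
*)
theory Submission
  imports Defs "HOL-Real_Asymp.Real_Asymp"
begin

section \<open>Interval integrals and Riemann step sums\<close>

lemma set_integrable_const_Ioo: "set_integrable lborel {p<..<q::real} (\<lambda>_. c::real)"
  by (cases "p \<le> q") (auto simp: set_integrable_def intro!: integrable_real_indicator)

lemma set_integral_Ioo_split: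
  fixes f :: "real \<Rightarrow> real"
  assumes "a \<le> b" "b \<le> c" "set_integrable lborel {a<..<c} f"
  shows "(LBINT x:{a<..<c}. f x) = (LBINT x:{a<..<b}. f x) + (LBINT x:{b<..<c}. f x)"
proof -
  have "interval_lebesgue_integrable lborel (ereal a) (ereal c) f"
    using assms by (simp add: interval_lebesgue_integrable_def einterval_eq)
  then have "(LBINT x=ereal a..ereal b. f x) + (LBINT x=ereal b..ereal c. f x) = (LBINT x=ereal a..ereal c. f x)"
    using assms by (intro interval_integral_sum) (simp add: min_def max_def)
  then show ?thesis
    using assms by (simp add: interval_lebesgue_integral_def einterval_eq)
qed

lemma set_integral_le_subset_nonpos:
  fixes f :: "'a \<Rightarrow> real"
  assumes "set_integrable M B f" "A \<subseteq> B" "A \<in> sets M" "\<And>x. x \<in> B - A \<Longrightarrow> f x \<le> 0"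
  shows "(LINT x:B|M. f x) \<le> (LINT x:A|M. f x)"
  unfolding set_lebesgue_integral_def
  using assms set_integrable_subset[of M B f A] unfolding set_integrable_def
  by (intro integral_mono) (auto split: split_indicator)

lemma tendsto_set_integral_exhausting:
  fixes f :: "'a \<Rightarrow> 'b::{banach, second_countable_topology}"
  assumes int: "set_integrable M S f" and sub: "\<And>n. A n \<subseteq> S" and sets: "\<And>n. A n \<in> sets M"
    and exh: "\<And>x. x \<in> S \<Longrightarrow> eventually (\<lambda>n. x \<in> A n) sequentially"
  shows "(\<lambda>n. LINT x:A n|M. f x) \<longlonglongrightarrow> (LINT x:S|M. f x)"
  unfolding set_lebesgue_integral_def
proof (rule integral_dominated_convergence)
  show "integrable M (\<lambda>x. indicat_real S x *\<^sub>R norm (f x))"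
    using integrable_norm[OF int[unfolded set_integrable_def]] by simp
  show "AE x in M. (\<lambda>n. indicat_real (A n) x *\<^sub>R f x) \<longlonglongrightarrow> indicat_real S x *\<^sub>R f x"
  proof (intro AE_I2)
    fix x show "(\<lambda>n. indicat_real (A n) x *\<^sub>R f x) \<longlonglongrightarrow> indicat_real S x *\<^sub>R f x"
    proof (cases "x \<in> S")
      case True
      then show ?thesis
        by (intro tendsto_eventually) (auto intro: eventually_mono[OF exh[OF True]])
    next
      case False
      then have "x \<notin> A n" for n
        using sub by blast
      then show ?thesis
        using False by simp
    qed
  qed
  show "AE x in M. norm (indicat_real (A n) x *\<^sub>R f x) \<le> indicat_real S x *\<^sub>R norm (f x)" for n
    using sub by (auto split: split_indicator)
  show "(\<lambda>x. indicat_real S x *\<^sub>R f x) \<in> borel_measurable M"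
    using int by (simp add: set_integrable_def)
  show "(\<lambda>x. indicat_real (A n) x *\<^sub>R f x) \<in> borel_measurable M" for n
    using set_integrable_subset[OF int sets sub] by (simp add: set_integrable_def)
qed

lemma tendsto_set_integral_Ioo_upper:
  fixes f :: "real \<Rightarrow> real"
  assumes "set_integrable lborel {a<..<b} f"
  shows "(\<lambda>n. LBINT x:{a<..<b - 1 / n}. f x) \<longlonglongrightarrow> (LBINT x:{a<..<b}. f x)"
proof (rule tendsto_set_integral_exhausting[OF assms])
  fix x assume "x \<in> {a<..<b}"
  then show "\<forall>\<^sub>F n in sequentially. x \<in> {a<..<b - 1 / n}"
    using order_tendstoD(2)[OF lim_inverse_n', of "b - x"] by (auto elim: eventually_mono)
qed (auto simp: greaterThanLessThan_subseteq_greaterThanLessThan)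

lemma tendsto_set_integral_Ioo_lower:
  fixes f :: "real \<Rightarrow> real"
  assumes "set_integrable lborel {a<..<b} f"
  shows "(\<lambda>n. LBINT x:{a + 1 / n<..<b}. f x) \<longlonglongrightarrow> (LBINT x:{a<..<b}. f x)"
proof (rule tendsto_set_integral_exhausting[OF assms])
  fix x assume "x \<in> {a<..<b}"
  then show "\<forall>\<^sub>F n in sequentially. x \<in> {a + 1 / n<..<b}"
    using order_tendstoD(2)[OF lim_inverse_n', of "x - a"] by (auto elim: eventually_mono)
qed (auto simp: greaterThanLessThan_subseteq_greaterThanLessThan)

lemma tendsto_set_integral_Ioi_lower:
  fixes f :: "real \<Rightarrow> real"
  assumes "set_integrable lborel {a<..} f"
  shows "(\<lambda>n. LBINT x:{a + 1 / n<..}. f x) \<longlonglongrightarrow> (LBINT x:{a<..}. f x)"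
proof (rule tendsto_set_integral_exhausting[OF assms])
  fix x assume "x \<in> {a<..}"
  then show "\<forall>\<^sub>F n in sequentially. x \<in> {a + 1 / n<..}"
    using order_tendstoD(2)[OF lim_inverse_n', of "x - a"] by (auto elim: eventually_mono)
qed auto

lemma set_integral_le_step_sum:
  fixes f :: "real \<Rightarrow> real" and c :: "nat \<Rightarrow> real" and a h :: real and k :: nat
  assumes h: "0 < h"
    and "set_integrable lborel {a<..<a + k * h} f"
    and "\<And>i x. i < k \<Longrightarrow> a + i * h < x \<Longrightarrow> x < a + Suc i * h \<Longrightarrow> f x \<le> c i"
  shows "(LBINT x:{a<..<a + k * h}. f x) \<le> h * (\<Sum>i<k. c i)"
  using assms(2,3)
proof (induction k)
  case 0
  then show ?case by (simp add: set_lebesgue_integral_def)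
next
  case (Suc k)
  let ?b = "a + k * h" and ?c = "a + Suc k * h"
  have "0 \<le> real k * h" "?b \<le> ?c"
    using h by (simp_all add: algebra_simps)
  then have int: "set_integrable lborel {a<..<?b} f" "set_integrable lborel {?b<..<?c} f"
    by (auto intro!: set_integrable_subset[OF Suc.prems(1)])
  have "(LBINT x:{a<..<?c}. f x) = (LBINT x:{a<..<?b}. f x) + (LBINT x:{?b<..<?c}. f x)"
    using h Suc.prems(1) by (intro set_integral_Ioo_split) (auto simp: algebra_simps)
  also have "(LBINT x:{a<..<?b}. f x) \<le> h * (\<Sum>i<k. c i)"
    using Suc.prems(2) by (intro Suc.IH[OF int(1)]) auto
  also have "(LBINT x:{?b<..<?c}. f x) \<le> (LBINT x:{?b<..<?c}. c k)"
    using int(2) Suc.prems(2)[of k] by (intro set_integral_mono set_integrable_const_Ioo) auto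
  also have "\<dots> = h * c k"
    using h by (simp add: set_integral_const algebra_simps)
  finally show ?case
    by (simp add: algebra_simps)
qed

lemma step_sum_le_set_integral:
  fixes f :: "real \<Rightarrow> real" and c :: "nat \<Rightarrow> real" and a h :: real and k :: nat
  assumes h: "0 < h"
    and int: "set_integrable lborel {a<..<a + k * h} f"
    and "\<And>i x. i < k \<Longrightarrow> a + i * h < x \<Longrightarrow> x < a + Suc i * h \<Longrightarrow> c i \<le> f x"
  shows "h * (\<Sum>i<k. c i) \<le> (LBINT x:{a<..<a + k * h}. f x)"
proof -
  have "set_integrable lborel {a<..<a + k * h} (\<lambda>x. - f x)"
    using int by (simp add: set_integrable_def)
  then have "(LBINT x:{a<..<a + k * h}. - f x) \<le> h * (\<Sum>i<k. - c i)"
    using assms by (intro set_integral_le_step_sum) auto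
  then show ?thesis
    using int by (simp add: set_integral_uminus sum_negf)
qed

lemma step_suminf_bounds_mono_nonpos:
  fixes f :: "real \<Rightarrow> real" and a h :: real
  assumes h: "0 < h" and mono: "\<And>x y. a < x \<Longrightarrow> x \<le> y \<Longrightarrow> f x \<le> f y"
    and nonpos: "\<And>x. a < x \<Longrightarrow> f x \<le> 0" and int: "set_integrable lborel {a<..} f"
  shows "summable (\<lambda>k. f (a + Suc k * h))"
    and "(LBINT x:{a<..}. f x) \<le> h * (\<Sum>k. f (a + Suc k * h))"
    and "h * (\<Sum>k. f (a + Suc k * h)) \<le> (LBINT x:{a + h<..}. f x)"
proof -
  let ?t = "\<lambda>k. f (a + Suc k * h)"
  have lower: "(LBINT x:{a<..}. f x) \<le> h * (\<Sum>k<K. ?t k)" for K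
  proof -
    have "(LBINT x:{a<..}. f x) \<le> (LBINT x:{a<..<a + K * h}. f x)"
      by (rule set_integral_le_subset_nonpos[OF int]) (auto intro: nonpos)
    also have "\<dots> \<le> h * (\<Sum>k<K. ?t k)"
    proof (intro set_integral_le_step_sum[OF h] set_integrable_subset[OF int])
      fix k x assume "a + real k * h < x" "x < a + real (Suc k) * h"
      moreover have "0 \<le> real k * h"
        using h by simp
      ultimately show "f x \<le> f (a + Suc k * h)"
        by (intro mono) auto
    qed auto
    finally show ?thesis .
  qed
  have "summable (\<lambda>k. - ?t k)"
  proof (rule summableI_nonneg_bounded)
    show "0 \<le> - ?t k" for k
      using h nonpos[of "a + Suc k * h"] by simp
    show "(\<Sum>k<K. - ?t k) \<le> - (LBINT x:{a<..}. f x) / h" for K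
      using lower[of K] h by (simp add: sum_negf field_simps)
  qed
  then show summable: "summable ?t"
    by (simp add: summable_minus_iff)
  have sums: "(\<lambda>K. h * (\<Sum>k<K. ?t k)) \<longlonglongrightarrow> h * (\<Sum>k. ?t k)"
    using summable by (intro tendsto_mult_left summable_LIMSEQ)
  then show "(LBINT x:{a<..}. f x) \<le> h * (\<Sum>k. ?t k)"
    by (rule LIMSEQ_le_const) (use lower in auto)
  have upper: "h * (\<Sum>k<K. ?t k) \<le> (LBINT x:{a + h<..<a + h + K * h}. f x)" for K
  proof (intro step_sum_le_set_integral[OF h] set_integrable_subset[OF int])
    fix k x assume "a + h + real k * h < x"
    moreover have "0 < real (Suc k) * h"
      using h by simp
    ultimately show "f (a + Suc k * h) \<le> f x"
      by (intro mono) (auto simp: algebra_simps)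
  qed (use h in auto)
  have "filterlim (\<lambda>K. a + h + real K * h) at_top sequentially"
    using h by real_asymp
  then have "(\<lambda>K. LBINT x:{a + h<..<a + h + K * h}. f x) \<longlonglongrightarrow> (LBINT x:{a + h<..}. f x)"
    using h by (intro tendsto_set_integral_exhausting set_integrable_subset[OF int])
      (auto simp: filterlim_at_top_dense elim: eventually_mono)
  with sums show "h * (\<Sum>k. ?t k) \<le> (LBINT x:{a + h<..}. f x)"
    by (rule LIMSEQ_le) (use upper in auto)
qed

lemma set_integrable_ln_Ioo_0_1:
  assumes "0 \<le> d"
  shows "set_integrable lborel {0<..<1::real} (\<lambda>z. - ln (1 - z) - d * ln z)"
proof -
  let ?F = "\<lambda>z. (1 - z) * ln (1 - z) + z + d * (z - z * ln z)"
  have "set_integrable lborel (einterval (ereal 0) (ereal 1)) (\<lambda>z. - ln (1 - z) - d * ln z)"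
  proof (rule interval_integral_FTC_nonneg(1)[where F = ?F and A = 0 and B = "1 + d"])
    fix x assume "ereal 0 < ereal x" "ereal x < ereal 1"
    then have x: "0 < x" "x < 1" by auto
    show "(?F has_real_derivative - ln (1 - x) - d * ln x) (at x)"
      using x by (auto intro!: derivative_eq_intros)
    show "isCont (\<lambda>z. - ln (1 - z) - d * ln z) x"
      using x by (auto intro!: continuous_intros)
  next
    show "AE x in lborel. ereal 0 < ereal x \<longrightarrow> ereal x < ereal 1 \<longrightarrow> 0 \<le> - ln (1 - x) - d * ln x"
    proof (intro AE_I2 impI)
      fix x assume "ereal 0 < ereal x" "ereal x < ereal 1"
      then have "ln x \<le> 0" "ln (1 - x) \<le> 0" by auto
      then show "0 \<le> - ln (1 - x) - d * ln x"
        using assms mult_nonneg_nonpos[of d "ln x"] by linarith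
    qed
    show "((?F \<circ> real_of_ereal) \<longlongrightarrow> 0) (at_right (ereal 0))"
      unfolding ereal_tendsto_simps by real_asymp
    show "((?F \<circ> real_of_ereal) \<longlongrightarrow> 1 + d) (at_left (ereal 1))"
      unfolding ereal_tendsto_simps by real_asymp
  qed simp
  then show ?thesis
    by (simp add: einterval_eq)
qed

lemma set_integrable_ln_Ioo_1_2:
  "set_integrable lborel {1<..<2::real} (\<lambda>z. ln 2 - ln (z - 1))"
proof -
  let ?F = "\<lambda>z. z * ln 2 - ((z - 1) * ln (z - 1) - (z - 1))"
  have "set_integrable lborel (einterval (ereal 1) (ereal 2)) (\<lambda>z. ln 2 - ln (z - 1))"
  proof (rule interval_integral_FTC_nonneg(1)[where F = ?F and A = "ln 2" and B = "2 * ln 2 + 1"])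
    fix x assume "ereal 1 < ereal x" "ereal x < ereal 2"
    then have x: "1 < x" "x < 2" by auto
    show "(?F has_real_derivative ln 2 - ln (x - 1)) (at x)"
      using x by (auto intro!: derivative_eq_intros)
    show "isCont (\<lambda>z. ln 2 - ln (z - 1)) x"
      using x by (auto intro!: continuous_intros)
  next
    show "AE x in lborel. ereal 1 < ereal x \<longrightarrow> ereal x < ereal 2 \<longrightarrow> 0 \<le> ln 2 - ln (x - 1)"
      by (auto intro!: AE_I2 simp: ln_mono)
    show "((?F \<circ> real_of_ereal) \<longlongrightarrow> ln 2) (at_right (ereal 1))"
      unfolding ereal_tendsto_simps by real_asymp
    show "((?F \<circ> real_of_ereal) \<longlongrightarrow> 2 * ln 2 + 1) (at_left (ereal 2))"
      unfolding ereal_tendsto_simps by real_asymp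
  qed simp
  then show ?thesis
    by (simp add: einterval_eq)
qed

lemma set_integrable_powr_Ioi:
  fixes a d :: real
  assumes "1 < d" "0 < a"
  shows "set_integrable lborel {a<..} (\<lambda>z. z powr - d)"
proof -
  let ?F = "\<lambda>z. 1 / (1 - d) * z powr (1 - d)"
  have "set_integrable lborel (einterval (ereal a) \<infinity>) (\<lambda>z. z powr - d)"
  proof (rule interval_integral_FTC_nonneg(1)[where F = ?F and A = "1 / (1 - d) * a powr (1 - d)" and B = 0])
    fix x assume "ereal a < ereal x"
    then have x: "0 < x"
      using assms by simp
    show "(?F has_real_derivative x powr - d) (at x)"
      using x assms by (auto intro!: derivative_eq_intros)
    show "isCont (\<lambda>z. z powr - d) x"
      using x by (auto intro!: continuous_intros)
  next
    show "AE x in lborel. ereal a < ereal x \<longrightarrow> ereal x < \<infinity> \<longrightarrow> 0 \<le> x powr - d"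
      by (auto intro!: AE_I2)
    show "((?F \<circ> real_of_ereal) \<longlongrightarrow> 1 / (1 - d) * a powr (1 - d)) (at_right (ereal a))"
      unfolding ereal_tendsto_simps using assms by (intro tendsto_intros) auto
    show "((?F \<circ> real_of_ereal) \<longlongrightarrow> 0) (at_left \<infinity>)"
      unfolding ereal_tendsto_simps using assms by real_asymp
  qed simp
  then show ?thesis
    by (simp add: einterval_eq)
qed

section \<open>The integrand of zeta\<close>

definition zeta_integrand :: "real \<Rightarrow> real \<Rightarrow> real" where
  "zeta_integrand d z = ln \<bar>1 - 1 / z powr d\<bar>"

lemma borel_measurable_zeta_integrand [measurable]: "zeta_integrand d \<in> borel_measurable borel"
  unfolding zeta_integrand_def by measurable

lemma zeta_integrand_below_one:
  assumes "0 < d" "0 < z" "z < 1"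
  shows "1 < 1 / z powr d" "zeta_integrand d z = ln (1 / z powr d - 1)"
proof -
  have "z powr d < 1"
    using assms powr_less_mono2[of d z 1] by simp
  then show "1 < 1 / z powr d"
    using assms by (simp add: field_simps)
  then show "zeta_integrand d z = ln (1 / z powr d - 1)"
    by (simp add: zeta_integrand_def)
qed

lemma zeta_integrand_above_one:
  assumes "0 < d" "1 < z"
  shows "0 < 1 - 1 / z powr d" "1 - 1 / z powr d < 1" "zeta_integrand d z = ln (1 - 1 / z powr d)"
proof -
  have "1 < z powr d"
    using assms powr_less_mono2[of d 1 z] by simp
  then show "0 < 1 - 1 / z powr d" "1 - 1 / z powr d < 1"
    using assms by (simp_all add: field_simps)
  then show "zeta_integrand d z = ln (1 - 1 / z powr d)"
    by (simp add: zeta_integrand_def)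
qed

lemma zeta_integrand_neg: "0 < d \<Longrightarrow> 1 < z \<Longrightarrow> zeta_integrand d z < 0"
  using zeta_integrand_above_one by simp

lemma zeta_integrand_antimono:
  assumes "0 < d" "0 < x" "x \<le> y" "y < 1"
  shows "zeta_integrand d y \<le> zeta_integrand d x"
proof -
  have "1 / y powr d \<le> 1 / x powr d"
    using assms by (intro divide_left_mono powr_mono2 mult_pos_pos) auto
  then show ?thesis
    using assms zeta_integrand_below_one[of d y] zeta_integrand_below_one[of d x] by simp
qed

lemma zeta_integrand_mono:
  assumes "0 < d" "1 < x" "x \<le> y"
  shows "zeta_integrand d x \<le> zeta_integrand d y"
proof -
  have "1 / y powr d \<le> 1 / x powr d"
    using assms by (intro divide_left_mono powr_mono2 mult_pos_pos) auto
  then show ?thesis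
    using assms zeta_integrand_above_one[of d y] zeta_integrand_above_one[of d x] by simp
qed

lemma zeta_integrand_nonneg:
  assumes "1 \<le> d" "0 < z" "z \<le> 1 / 2"
  shows "0 \<le> zeta_integrand d z"
proof -
  have "z powr d \<le> z powr 1"
    using assms by (intro powr_mono') auto
  then have "2 \<le> 1 / z powr d"
    using assms by (simp add: field_simps)
  then show ?thesis
    by (simp add: zeta_integrand_def)
qed

lemma zeta_integrand_le_minus_ln:
  assumes "0 < d" "0 < z" "z < 1"
  shows "zeta_integrand d z \<le> - d * ln z"
proof -
  have "zeta_integrand d z \<le> ln (1 / z powr d)"
    using zeta_integrand_below_one[OF assms] by (simp add: ln_mono)
  also have "\<dots> = - d * ln z"
    using assms by (simp add: ln_div ln_powr)
  finally show ?thesis .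
qed

lemma zeta_d_eq_integrals:
  assumes "0 < d"
  shows "zeta_d d = (LBINT z:{0<..<1}. zeta_integrand d z) + (LBINT z:{1<..}. zeta_integrand d z)"
  unfolding zeta_d_def
  using zeta_integrand_below_one[OF assms] zeta_integrand_above_one[OF assms]
  by (auto intro!: arg_cong2[where f = "(+)"] set_lebesgue_integral_cong)

lemma abs_zeta_integrand_le_Ioo_0_1:
  assumes "1 \<le> d" "0 < z" "z < 1"
  shows "\<bar>zeta_integrand d z\<bar> \<le> - ln (1 - z) - d * ln z"
proof -
  have zd: "0 < z powr d" "z powr d \<le> z" "z powr d < 1"
    using assms powr_less_mono2[of d z 1] powr_mono'[of 1 d z] by auto
  have "zeta_integrand d z = ln ((1 - z powr d) / z powr d)"
    using zeta_integrand_below_one[of d z] assms zd by (simp add: diff_divide_distrib)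
  also have "\<dots> = ln (1 - z powr d) - d * ln z"
    using assms zd by (simp add: ln_div ln_powr)
  finally have "zeta_integrand d z = ln (1 - z powr d) - d * ln z" .
  moreover have "ln (1 - z) \<le> ln (1 - z powr d)" "ln (1 - z powr d) \<le> 0"
    using assms zd by auto
  moreover have "ln z \<le> 0"
    using assms by simp
  moreover have "0 \<le> d"
    using assms by simp
  ultimately show ?thesis
    using mult_nonneg_nonpos[of d "ln z"] by linarith
qed

lemma abs_zeta_integrand_le_Ioo_1_2:
  assumes "1 \<le> d" "1 < z" "z < 2"
  shows "\<bar>zeta_integrand d z\<bar> \<le> ln 2 - ln (z - 1)"
proof -
  have "1 / z powr d \<le> 1 / z"
    using assms powr_mono[of 1 d z] by (intro divide_left_mono) auto
  moreover have "(z - 1) / 2 \<le> (z - 1) / z"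
    using assms by (intro divide_left_mono) auto
  moreover have "(z - 1) / z = 1 - 1 / z"
    using assms by (simp add: field_simps)
  ultimately have "ln ((z - 1) / 2) \<le> ln (1 - 1 / z powr d)"
    using assms by (intro ln_mono) auto
  then have "ln (z - 1) - ln 2 \<le> zeta_integrand d z"
    using assms zeta_integrand_above_one[of d z] by (simp add: ln_div)
  then show ?thesis
    using zeta_integrand_neg[of d z] assms by linarith
qed

lemma abs_zeta_integrand_le_Ioi_2:
  assumes "1 \<le> d" "2 < z"
  shows "\<bar>zeta_integrand d z\<bar> \<le> 2 * z powr - d"
proof -
  define y where "y = 1 / z powr d"
  have y: "0 \<le> y" "y \<le> 1 / 2"
    using assms powr_mono[of 1 d z] by (auto simp: y_def field_simps)
  have "- y - 2 * y\<^sup>2 \<le> ln (1 - y)"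
    using ln_one_minus_pos_lower_bound[OF y] .
  moreover have "2 * y\<^sup>2 \<le> y"
    using y mult_right_mono[of "2 * y" 1 y] by (simp add: power2_eq_square)
  ultimately have "- 2 * y \<le> zeta_integrand d z"
    using zeta_integrand_above_one[of d z] assms by (simp add: y_def)
  then show ?thesis
    using zeta_integrand_neg[of d z] assms by (simp add: y_def powr_minus_divide)
qed

lemma set_integrable_zeta_integrand_Ioo_0_1:
  assumes "1 \<le> d"
  shows "set_integrable lborel {0<..<1} (zeta_integrand d)"
  by (rule set_integrable_bound[OF set_integrable_ln_Ioo_0_1[of d]])
    (use assms in \<open>auto intro!: AE_I2 order_trans[OF abs_zeta_integrand_le_Ioo_0_1 abs_ge_self]
      simp: set_borel_measurable_def\<close>)

lemma set_integrable_zeta_integrand_Ioi_1: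
  assumes "1 < d"
  shows "set_integrable lborel {1<..} (zeta_integrand d)"
proof -
  have "set_integrable lborel {1<..<2} (zeta_integrand d)"
    by (rule set_integrable_bound[OF set_integrable_ln_Ioo_1_2])
      (use assms abs_zeta_integrand_le_Ioo_1_2 in \<open>auto simp: set_borel_measurable_def\<close>)
  moreover have "set_integrable lborel {2<..} (zeta_integrand d)"
    by (rule set_integrable_bound[OF set_integrable_mult_right[OF set_integrable_powr_Ioi[OF assms, of 2], of 2]])
      (use assms abs_zeta_integrand_le_Ioi_2 in \<open>auto simp: set_borel_measurable_def\<close>)
  ultimately have "set_integrable lborel ({1<..<2} \<union> {2<..}) (zeta_integrand d)"
    by (rule set_integrable_Un) auto
  then show ?thesis
    by (subst (asm) set_integrable_discrete_difference[where X = "{2}"]) auto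
qed

lemma zeta_integrand_sum_le_set_integral:
  fixes n :: nat
  assumes "1 \<le> d" "0 < n"
  shows "(\<Sum>m\<in>{1..<n}. zeta_integrand d (m / n)) / n \<le> (LBINT z:{0<..<1 - 1 / n}. zeta_integrand d z)"
proof -
  have len: "0 + real (n - 1) * (1 / n) = 1 - 1 / n"
    using assms by (simp add: of_nat_diff field_simps)
  have "1 / real n * (\<Sum>i<n - 1. zeta_integrand d (Suc i / n))
      \<le> (LBINT z:{0<..<0 + real (n - 1) * (1 / n)}. zeta_integrand d z)"
  proof (rule step_sum_le_set_integral)
    show "set_integrable lborel {0<..<0 + real (n - 1) * (1 / n)} (zeta_integrand d)"
      unfolding len
      by (rule set_integrable_subset[OF set_integrable_zeta_integrand_Ioo_0_1])
        (use assms in \<open>auto simp: greaterThanLessThan_subseteq_greaterThanLessThan\<close>)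
    fix i x assume i: "i < n - 1" and x: "0 + i * (1 / n) < x" "x < 0 + Suc i * (1 / n)"
    have "0 \<le> real i / n" "real i / n < x"
      using x(1) by simp_all
    then have "0 < x"
      by linarith
    moreover have "Suc i / n < 1"
      using i by (simp add: field_simps)
    ultimately show "zeta_integrand d (Suc i / n) \<le> zeta_integrand d x"
      using assms x by (intro zeta_integrand_antimono) auto
  qed (use assms in simp)
  moreover have "{1..<n} = {Suc 0..n - 1}"
    using assms by auto
  ultimately show ?thesis
    unfolding len by (simp add: sum.atLeast1_atMost_eq)
qed

lemma set_integral_le_zeta_integrand_sum:
  fixes n :: nat
  assumes "1 \<le> d" "0 < n"
  shows "(LBINT z:{1 / n<..<1}. zeta_integrand d z) \<le> (\<Sum>m\<in>{1..<n}. zeta_integrand d (m / n)) / n"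
proof -
  have len: "1 / n + real (n - 1) * (1 / n) = 1"
    using assms by (simp add: of_nat_diff field_simps)
  have "(LBINT z:{1 / n<..<1 / n + real (n - 1) * (1 / n)}. zeta_integrand d z)
      \<le> 1 / real n * (\<Sum>i<n - 1. zeta_integrand d (Suc i / n))"
  proof (rule set_integral_le_step_sum)
    show "set_integrable lborel {1 / n<..<1 / n + real (n - 1) * (1 / n)} (zeta_integrand d)"
      unfolding len
      by (rule set_integrable_subset[OF set_integrable_zeta_integrand_Ioo_0_1])
        (use assms in \<open>auto simp: greaterThanLessThan_subseteq_greaterThanLessThan\<close>)
    fix i x assume i: "i < n - 1" and x: "1 / n + i * (1 / n) < x" "x < 1 / n + Suc i * (1 / n)"
    have "Suc i / n < x" "x < (i + 2) / n"
      using x by (simp_all add: add_divide_distrib)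
    moreover have "(i + 2) / n \<le> 1"
      using i by (simp add: field_simps)
    ultimately have "Suc i / n < x" "x < 1"
      by linarith+
    then show "zeta_integrand d x \<le> zeta_integrand d (Suc i / n)"
      using assms by (intro zeta_integrand_antimono) auto
  qed (use assms in simp)
  moreover have "{1..<n} = {Suc 0..n - 1}"
    using assms by auto
  ultimately show ?thesis
    unfolding len by (simp add: sum.atLeast1_atMost_eq)
qed

lemma zeta_integrand_suminf_bounds:
  fixes n :: nat
  assumes "1 < d" "0 < n"
  shows "summable (\<lambda>k. zeta_integrand d ((n + Suc k) / n))"
    and "(LBINT z:{1<..}. zeta_integrand d z) \<le> (\<Sum>k. zeta_integrand d ((n + Suc k) / n)) / n"
    and "(\<Sum>k. zeta_integrand d ((n + Suc k) / n)) / n \<le> (LBINT z:{1 + 1 / n<..}. zeta_integrand d z)"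
proof -
  have "0 < 1 / real n"
    using assms by simp
  note bounds = step_suminf_bounds_mono_nonpos[OF this, of 1 "zeta_integrand d"]
  have "1 + real (Suc k) * (1 / n) = (n + Suc k) / n" for k
    using assms by (simp add: field_simps)
  moreover have "zeta_integrand d x \<le> 0" if "1 < x" for x
    using zeta_integrand_neg[of d x] assms that by simp
  ultimately show "summable (\<lambda>k. zeta_integrand d ((n + Suc k) / n))"
    and "(LBINT z:{1<..}. zeta_integrand d z) \<le> (\<Sum>k. zeta_integrand d ((n + Suc k) / n)) / n"
    and "(\<Sum>k. zeta_integrand d ((n + Suc k) / n)) / n \<le> (LBINT z:{1 + 1 / n<..}. zeta_integrand d z)"
    using bounds assms zeta_integrand_mono[of d] set_integrable_zeta_integrand_Ioi_1[of d] by simp_all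
qed

section \<open>Comparing alpha with Riemann sums\<close>

lemma strict_antimono_from_one:
  fixes a :: "nat \<Rightarrow> real"
  assumes "\<forall>n\<ge>1. a (Suc n) < a n" "1 \<le> m" "m < n"
  shows "a n < a m"
  using assms(3,2) by (induction m n rule: less_Suc_induct) (use assms(1) in auto)

lemma ln_abs_one_minus_le:
  fixes r s :: real
  assumes "1 < r \<and> r \<le> s \<or> s \<le> r \<and> r < 1"
  shows "ln \<bar>1 - r\<bar> \<le> ln \<bar>1 - s\<bar>"
  using assms by (auto intro!: ln_mono)

lemma zeta_integrand_ratio:
  assumes "0 < m" "0 < n"
  shows "zeta_integrand d (m / n) = ln \<bar>1 - n powr d / m powr d\<bar>"
  using assms by (simp add: zeta_integrand_def powr_divide)

lemma ln_ratio_le_zeta_integrand: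
  fixes a :: "nat \<Rightarrow> real" and N m n :: nat
  assumes pos: "\<forall>n\<ge>1. a n > 0" and decr: "\<forall>n\<ge>1. a (Suc n) < a n"
    and incr: "\<forall>m n. N \<le> m \<longrightarrow> m \<le> n \<longrightarrow> real m powr d * a m \<le> real n powr d * a n"
    and "1 \<le> N" "N \<le> m" "N \<le> n" "m \<noteq> n"
  shows "ln \<bar>1 - a m / a n\<bar> \<le> zeta_integrand d (m / n)"
proof -
  have mn: "0 < a m" "0 < a n" "0 < real m" "0 < real n"
    using assms by auto
  consider "m < n" | "n < m"
    using \<open>m \<noteq> n\<close> by linarith
  then have "1 < a m / a n \<and> a m / a n \<le> n powr d / m powr d \<or> n powr d / m powr d \<le> a m / a n \<and> a m / a n < 1"
  proof cases
    case 1
    then show ?thesis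
      using strict_antimono_from_one[OF decr, of m n] incr[rule_format, of m n] assms mn
      by (simp add: field_simps)
  next
    case 2
    then show ?thesis
      using strict_antimono_from_one[OF decr, of n m] incr[rule_format, of n m] assms mn
      by (simp add: field_simps)
  qed
  then show ?thesis
    unfolding zeta_integrand_ratio[OF mn(3,4)] by (rule ln_abs_one_minus_le)
qed

lemma zeta_integrand_le_ln_ratio:
  fixes a :: "nat \<Rightarrow> real" and N m n :: nat
  assumes pos: "\<forall>n\<ge>1. a n > 0" and decr: "\<forall>n\<ge>1. a (Suc n) < a n" and "0 < d"
    and anti: "\<forall>m n. N \<le> m \<longrightarrow> m \<le> n \<longrightarrow> real n powr d * a n \<le> real m powr d * a m"
    and "1 \<le> N" "N \<le> m" "N \<le> n" "m \<noteq> n"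
  shows "zeta_integrand d (m / n) \<le> ln \<bar>1 - a m / a n\<bar>"
proof -
  have mn: "0 < a m" "0 < a n" "0 < real m" "0 < real n"
    using assms by auto
  consider "m < n" | "n < m"
    using \<open>m \<noteq> n\<close> by linarith
  then have "1 < n powr d / m powr d \<and> n powr d / m powr d \<le> a m / a n
      \<or> a m / a n \<le> n powr d / m powr d \<and> n powr d / m powr d < 1"
  proof cases
    case 1
    then show ?thesis
      using anti[rule_format, of m n] assms mn powr_less_mono2[of d m n]
      by (simp add: field_simps)
  next
    case 2
    then show ?thesis
      using anti[rule_format, of n m] assms mn powr_less_mono2[of d n m]
      by (simp add: field_simps)
  qed
  then show ?thesis
    unfolding zeta_integrand_ratio[OF mn(3,4)] by (rule ln_abs_one_minus_le)
qed

lemma ln_ratio_le_zeta_integrand_head: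
  fixes a :: "nat \<Rightarrow> real" and m n :: nat
  assumes pos: "\<forall>n\<ge>1. a n > 0" and decr: "\<forall>n\<ge>1. a (Suc n) < a n"
    and "1 \<le> d" "1 \<le> m" "2 * m \<le> n"
  shows "ln \<bar>1 - a m / a n\<bar> \<le> zeta_integrand d (m / n) + (ln (a 1) - ln (a n))"
proof -
  have mn: "0 < a m" "0 < a n" "a n < a m" "a m \<le> a 1"
    using assms strict_antimono_from_one[OF decr, of m n] strict_antimono_from_one[OF decr, of 1 m]
    by (auto simp: le_less)
  then have "ln \<bar>1 - a m / a n\<bar> \<le> ln (a m / a n)"
    by (intro ln_mono) (auto simp: field_simps)
  also have "\<dots> \<le> ln (a 1) - ln (a n)"
    using mn by (simp add: ln_div)
  also have "\<dots> \<le> zeta_integrand d (m / n) + (ln (a 1) - ln (a n))"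
    using assms zeta_integrand_nonneg[of d "m / n"] by (simp add: field_simps)
  finally show ?thesis .
qed

lemma zeta_integrand_head_le_ln_ratio:
  fixes a :: "nat \<Rightarrow> real" and m n :: nat
  assumes "0 < d" "0 < a n" "2 * a n \<le> a m" "1 \<le> m" "m < n"
  shows "zeta_integrand d (m / n) - d * ln n \<le> ln \<bar>1 - a m / a n\<bar>"
proof -
  have "zeta_integrand d (m / n) \<le> - d * ln (m / n)"
    using assms by (intro zeta_integrand_le_minus_ln) auto
  also have "\<dots> \<le> d * ln n"
    using assms by (simp add: ln_div algebra_simps)
  finally have "zeta_integrand d (m / n) \<le> d * ln n" .
  moreover have "1 \<le> \<bar>1 - a m / a n\<bar>"
    using assms by (simp add: field_simps)
  then have "0 \<le> ln \<bar>1 - a m / a n\<bar>"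
    by simp
  ultimately show ?thesis
    by linarith
qed

lemma alpha_le_sum_bounds:
  assumes "(\<Sum>m\<in>{1..<n}. ln \<bar>1 - a m / a n\<bar>) \<le> s" and "summable t" and "\<And>k. t k \<le> 0"
    and "\<And>k. ln \<bar>1 - a (n + Suc k) / a n\<bar> \<le> t k"
  shows "alpha a n \<le> ereal ((s + suminf t) / n)"
proof -
  have "ereal (- suminf t) = (\<Sum>k. ereal (- t k))"
    using suminf_ereal'[OF summable_minus[OF assms(2)]] suminf_minus[OF assms(2)] by simp
  also have "\<dots> \<le> (\<Sum>k. ereal (- ln \<bar>1 - a (n + Suc k) / a n\<bar>))"
    using assms(3,4) by (intro suminf_le_pos) (auto simp: le_minus_iff)
  finally have tail: "ereal (- suminf t) \<le> (\<Sum>k. ereal (- ln \<bar>1 - a (n + Suc k) / a n\<bar>))" .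
  have "alpha a n \<le> ereal (1 / n) * (ereal s - ereal (- suminf t))"
    unfolding alpha_def using assms(1) tail by (intro ereal_mult_left_mono ereal_minus_mono) auto
  also have "\<dots> = ereal ((s + suminf t) / n)"
    by simp
  finally show ?thesis .
qed

lemma sum_bounds_le_alpha:
  assumes "s \<le> (\<Sum>m\<in>{1..<n}. ln \<bar>1 - a m / a n\<bar>)" and "summable t"
    and "\<And>k. t k \<le> ln \<bar>1 - a (n + Suc k) / a n\<bar>" and "\<And>k. ln \<bar>1 - a (n + Suc k) / a n\<bar> \<le> 0"
  shows "ereal ((s + suminf t) / n) \<le> alpha a n"
proof -
  have "(\<Sum>k. ereal (- ln \<bar>1 - a (n + Suc k) / a n\<bar>)) \<le> (\<Sum>k. ereal (- t k))"
    using assms(3,4) by (intro suminf_le_pos) auto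
  also have "\<dots> = ereal (- suminf t)"
    using suminf_ereal'[OF summable_minus[OF assms(2)]] suminf_minus[OF assms(2)] by simp
  finally have tail: "(\<Sum>k. ereal (- ln \<bar>1 - a (n + Suc k) / a n\<bar>)) \<le> ereal (- suminf t)" .
  have "ereal ((s + suminf t) / n) = ereal (1 / n) * (ereal s - ereal (- suminf t))"
    by simp
  also have "\<dots> \<le> alpha a n"
    unfolding alpha_def using assms(1) tail by (intro ereal_mult_left_mono ereal_minus_mono) auto
  finally show ?thesis .
qed

lemma sum_if_less_const:
  fixes c :: real
  assumes "N \<le> n"
  shows "(\<Sum>m\<in>{1..<n}. if m < N then c else 0) = real (N - 1) * c"
proof -
  have "{m \<in> {1..<n}. m < N} = {1..<N}"
    using assms by auto
  then show ?thesis
    by (simp flip: sum.inter_filter)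
qed

lemma sum_ln_ratio_le_zeta_integrand:
  fixes a :: "nat \<Rightarrow> real" and N n :: nat
  assumes pos: "\<forall>n\<ge>1. a n > 0" and decr: "\<forall>n\<ge>1. a (Suc n) < a n" and "1 \<le> d" "1 \<le> N"
    and incr: "\<forall>m n. N \<le> m \<longrightarrow> m \<le> n \<longrightarrow> real m powr d * a m \<le> real n powr d * a n"
    and "2 * N \<le> n"
  shows "(\<Sum>m\<in>{1..<n}. ln \<bar>1 - a m / a n\<bar>)
      \<le> (\<Sum>m\<in>{1..<n}. zeta_integrand d (m / n)) + real (N - 1) * (ln (a 1) - ln (a n))"
proof -
  have "(\<Sum>m\<in>{1..<n}. ln \<bar>1 - a m / a n\<bar>)
      \<le> (\<Sum>m\<in>{1..<n}. zeta_integrand d (m / n) + (if m < N then ln (a 1) - ln (a n) else 0))"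
  proof (intro sum_mono)
    fix m assume m: "m \<in> {1..<n}"
    show "ln \<bar>1 - a m / a n\<bar> \<le> zeta_integrand d (m / n) + (if m < N then ln (a 1) - ln (a n) else 0)"
    proof (cases "m < N")
      case True
      then show ?thesis
        using assms m ln_ratio_le_zeta_integrand_head[OF pos decr \<open>1 \<le> d\<close>, of m n] by simp
    next
      case False
      then show ?thesis
        using assms m by (simp add: ln_ratio_le_zeta_integrand)
    qed
  qed
  also have "\<dots> = (\<Sum>m\<in>{1..<n}. zeta_integrand d (m / n)) + real (N - 1) * (ln (a 1) - ln (a n))"
    using assms sum_if_less_const[of N n "ln (a 1) - ln (a n)"] by (simp add: sum.distrib)
  finally show ?thesis .
qed

lemma zeta_integrand_sum_le_sum_ln_ratio:
  fixes a :: "nat \<Rightarrow> real" and N n :: nat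
  assumes pos: "\<forall>n\<ge>1. a n > 0" and decr: "\<forall>n\<ge>1. a (Suc n) < a n" and "0 < d" "1 \<le> N"
    and anti: "\<forall>m n. N \<le> m \<longrightarrow> m \<le> n \<longrightarrow> real n powr d * a n \<le> real m powr d * a m"
    and "N \<le> n" "2 * a n \<le> a N"
  shows "(\<Sum>m\<in>{1..<n}. zeta_integrand d (m / n)) - real (N - 1) * (d * ln n)
      \<le> (\<Sum>m\<in>{1..<n}. ln \<bar>1 - a m / a n\<bar>)"
proof -
  have "(\<Sum>m\<in>{1..<n}. zeta_integrand d (m / n)) - real (N - 1) * (d * ln n)
      = (\<Sum>m\<in>{1..<n}. zeta_integrand d (m / n) - (if m < N then d * ln n else 0))"
    using sum_if_less_const[OF \<open>N \<le> n\<close>, of "d * ln n"] by (simp add: sum_subtractf)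
  also have "\<dots> \<le> (\<Sum>m\<in>{1..<n}. ln \<bar>1 - a m / a n\<bar>)"
  proof (intro sum_mono)
    fix m assume m: "m \<in> {1..<n}"
    show "zeta_integrand d (m / n) - (if m < N then d * ln n else 0) \<le> ln \<bar>1 - a m / a n\<bar>"
    proof (cases "m < N")
      case True
      then have "a N < a m"
        using m strict_antimono_from_one[OF decr] by simp
      then show ?thesis
        using assms m True by (simp add: zeta_integrand_head_le_ln_ratio)
    next
      case False
      then show ?thesis
        using assms m by (simp add: zeta_integrand_le_ln_ratio)
    qed
  qed
  finally show ?thesis .
qed

lemma alpha_le_zeta_integrals:
  fixes a :: "nat \<Rightarrow> real" and N n :: nat
  assumes pos: "\<forall>n\<ge>1. a n > 0" and decr: "\<forall>n\<ge>1. a (Suc n) < a n" and d: "1 < d" and "1 \<le> N"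
    and incr: "\<forall>m n. N \<le> m \<longrightarrow> m \<le> n \<longrightarrow> real m powr d * a m \<le> real n powr d * a n"
    and "2 * N \<le> n"
  shows "alpha a n \<le> ereal ((LBINT z:{0<..<1 - 1 / n}. zeta_integrand d z)
      + (LBINT z:{1 + 1 / n<..}. zeta_integrand d z)
      + real (N - 1) * (ln (a 1) - ln (N powr d * a N) + d * ln n) / n)"
proof -
  define B where "B = ln (a 1) - ln (N powr d * a N) + d * ln n"
  define t where "t k = zeta_integrand d ((n + Suc k) / n)" for k
  have n: "0 < n" "N \<le> n"
    using assms by auto
  have "0 < a n"
    using pos n by simp
  have "ln (N powr d * a N) \<le> ln (n powr d * a n)"
    using assms n incr[rule_format, of N n] by (intro ln_mono) auto
  also have "\<dots> = d * ln n + ln (a n)"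
    using \<open>0 < a n\<close> n by (simp add: ln_mult ln_powr)
  finally have "ln (a 1) - ln (a n) \<le> B"
    unfolding B_def by simp
  then have "real (N - 1) * (ln (a 1) - ln (a n)) \<le> real (N - 1) * B"
    by (rule mult_left_mono) simp
  then have head: "(\<Sum>m\<in>{1..<n}. ln \<bar>1 - a m / a n\<bar>) \<le> (\<Sum>m\<in>{1..<n}. zeta_integrand d (m / n)) + real (N - 1) * B"
    using sum_ln_ratio_le_zeta_integrand[OF pos decr _ \<open>1 \<le> N\<close> incr \<open>2 * N \<le> n\<close>] d by linarith
  have "ln \<bar>1 - a (n + Suc k) / a n\<bar> \<le> t k" for k
    unfolding t_def using assms n by (intro ln_ratio_le_zeta_integrand[OF pos decr incr]) auto
  moreover have "t k \<le> 0" for k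
    unfolding t_def using d n zeta_integrand_neg[of d "(n + Suc k) / n"] by (simp add: field_simps)
  ultimately have "alpha a n \<le> ereal (((\<Sum>m\<in>{1..<n}. zeta_integrand d (m / n)) + real (N - 1) * B + suminf t) / n)"
    using head zeta_integrand_suminf_bounds(1)[OF d n(1)] unfolding t_def by (intro alpha_le_sum_bounds) auto
  also have "\<dots> \<le> ereal ((LBINT z:{0<..<1 - 1 / n}. zeta_integrand d z)
      + (LBINT z:{1 + 1 / n<..}. zeta_integrand d z) + real (N - 1) * B / n)"
    using zeta_integrand_sum_le_set_integral[of d n] zeta_integrand_suminf_bounds(3)[OF d n(1)] d n
    unfolding t_def by (simp add: add_divide_distrib)
  finally show ?thesis
    unfolding B_def .
qed

lemma zeta_integrals_le_alpha:
  fixes a :: "nat \<Rightarrow> real" and N n :: nat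
  assumes pos: "\<forall>n\<ge>1. a n > 0" and decr: "\<forall>n\<ge>1. a (Suc n) < a n" and d: "1 < d" and "1 \<le> N"
    and anti: "\<forall>m n. N \<le> m \<longrightarrow> m \<le> n \<longrightarrow> real n powr d * a n \<le> real m powr d * a m"
    and "N \<le> n" "2 * a n \<le> a N"
  shows "ereal ((LBINT z:{1 / n<..<1}. zeta_integrand d z) + (LBINT z:{1<..}. zeta_integrand d z)
      - real (N - 1) * (d * ln n) / n) \<le> alpha a n"
proof -
  define t where "t k = zeta_integrand d ((n + Suc k) / n)" for k
  have n: "0 < n"
    using assms by auto
  have "(LBINT z:{1 / n<..<1}. zeta_integrand d z) + (LBINT z:{1<..}. zeta_integrand d z)
      - real (N - 1) * (d * ln n) / n
      \<le> ((\<Sum>m\<in>{1..<n}. zeta_integrand d (m / n)) - real (N - 1) * (d * ln n) + suminf t) / n"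
    using set_integral_le_zeta_integrand_sum[of d n] zeta_integrand_suminf_bounds(2)[OF d n] d n
    unfolding t_def by (simp add: diff_divide_distrib add_divide_distrib)
  also have "ereal \<dots> \<le> alpha a n"
  proof (rule sum_bounds_le_alpha)
    show "(\<Sum>m\<in>{1..<n}. zeta_integrand d (m / n)) - real (N - 1) * (d * ln n)
        \<le> (\<Sum>m\<in>{1..<n}. ln \<bar>1 - a m / a n\<bar>)"
      using d by (intro zeta_integrand_sum_le_sum_ln_ratio[OF pos decr _ \<open>1 \<le> N\<close> anti]) (use assms in auto)
    show "summable t"
      unfolding t_def by (rule zeta_integrand_suminf_bounds(1)[OF d n])
    show "t k \<le> ln \<bar>1 - a (n + Suc k) / a n\<bar>" for k
      unfolding t_def using assms by (intro zeta_integrand_le_ln_ratio[OF pos decr _ anti]) auto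
    show "ln \<bar>1 - a (n + Suc k) / a n\<bar> \<le> 0" for k
    proof -
      have "0 < a (n + Suc k)" "a (n + Suc k) < a n"
        using pos n strict_antimono_from_one[OF decr, of n "n + Suc k"] by auto
      then show ?thesis
        by simp
    qed
  qed
  finally show ?thesis
    by simp
qed

lemma limsup_alpha_le_zeta_d:
  fixes a :: "nat \<Rightarrow> real"
  assumes pos: "\<forall>n\<ge>1. a n > 0" and decr: "\<forall>n\<ge>1. a (Suc n) < a n" and d: "1 < d"
    and "\<exists>N. \<forall>m n. N \<le> m \<longrightarrow> m \<le> n \<longrightarrow> real m powr d * a m \<le> real n powr d * a n"
  shows "limsup (alpha a) \<le> ereal (zeta_d d)"
proof -
  obtain N0 where N0: "\<forall>m n. N0 \<le> m \<longrightarrow> m \<le> n \<longrightarrow> real m powr d * a m \<le> real n powr d * a n"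
    using assms(4) by blast
  define N where "N = Suc N0"
  have "1 \<le> N" and incr: "\<forall>m n. N \<le> m \<longrightarrow> m \<le> n \<longrightarrow> real m powr d * a m \<le> real n powr d * a n"
    using N0 by (auto simp: N_def)
  define U where "U n = (LBINT z:{0<..<1 - 1 / n}. zeta_integrand d z)
      + (LBINT z:{1 + 1 / n<..}. zeta_integrand d z)
      + real (N - 1) * (ln (a 1) - ln (N powr d * a N) + d * ln n) / n" for n :: nat
  have ev: "\<forall>\<^sub>F n in sequentially. alpha a n \<le> ereal (U n)"
    unfolding U_def using alpha_le_zeta_integrals[OF pos decr d \<open>1 \<le> N\<close> incr]
    by (intro eventually_sequentiallyI[of "2 * N"])
  have "U \<longlonglongrightarrow> (LBINT z:{0<..<1}. zeta_integrand d z) + (LBINT z:{1<..}. zeta_integrand d z) + 0"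
    unfolding U_def using d
    by (intro tendsto_add tendsto_set_integral_Ioo_upper tendsto_set_integral_Ioi_lower
        set_integrable_zeta_integrand_Ioo_0_1 set_integrable_zeta_integrand_Ioi_1) (simp_all, real_asymp)
  then have "limsup (\<lambda>n. ereal (U n)) = ereal (zeta_d d)"
    using d by (intro lim_imp_Limsup) (simp_all add: zeta_d_eq_integrals)
  with Limsup_mono[OF ev] show ?thesis
    by simp
qed

lemma liminf_alpha_ge_zeta_d:
  fixes a :: "nat \<Rightarrow> real"
  assumes pos: "\<forall>n\<ge>1. a n > 0" and decr: "\<forall>n\<ge>1. a (Suc n) < a n" and lim: "a \<longlonglongrightarrow> 0" and d: "1 < d"
    and "\<exists>N. \<forall>m n. N \<le> m \<longrightarrow> m \<le> n \<longrightarrow> real n powr d * a n \<le> real m powr d * a m"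
  shows "ereal (zeta_d d) \<le> liminf (alpha a)"
proof -
  obtain N0 where N0: "\<forall>m n. N0 \<le> m \<longrightarrow> m \<le> n \<longrightarrow> real n powr d * a n \<le> real m powr d * a m"
    using assms(5) by blast
  define N where "N = Suc N0"
  have "1 \<le> N" and anti: "\<forall>m n. N \<le> m \<longrightarrow> m \<le> n \<longrightarrow> real n powr d * a n \<le> real m powr d * a m"
    using N0 by (auto simp: N_def)
  define L where "L n = (LBINT z:{1 / n<..<1}. zeta_integrand d z) + (LBINT z:{1<..}. zeta_integrand d z)
      - real (N - 1) * (d * ln n) / n" for n :: nat
  have "\<forall>\<^sub>F n in sequentially. 2 * a n \<le> a N"
    using order_tendstoD(2)[OF lim, of "a N / 2"] pos \<open>1 \<le> N\<close> by (auto elim: eventually_mono)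
  then have ev: "\<forall>\<^sub>F n in sequentially. ereal (L n) \<le> alpha a n"
    using eventually_ge_at_top[of N] unfolding L_def
    by eventually_elim (use zeta_integrals_le_alpha[OF pos decr d \<open>1 \<le> N\<close> anti] in auto)
  have "L \<longlonglongrightarrow> (LBINT z:{0<..<1}. zeta_integrand d z) + (LBINT z:{1<..}. zeta_integrand d z) - 0"
    unfolding L_def using d tendsto_set_integral_Ioo_lower[of 0 1 "zeta_integrand d"]
    by (intro tendsto_diff tendsto_add tendsto_const) (simp_all add: set_integrable_zeta_integrand_Ioo_0_1, real_asymp)
  then have "liminf (\<lambda>n. ereal (L n)) = ereal (zeta_d d)"
    using d by (intro lim_imp_Liminf) (simp_all add: zeta_d_eq_integrals)
  with Liminf_mono[OF ev] show ?thesis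
    by simp
qed

theorem proposition2:
  fixes a :: "nat \<Rightarrow> real" and d :: real
  assumes pos: "\<forall>n\<ge>1. a n > 0"
    and decr: "\<forall>n\<ge>1. a (Suc n) < a n"
    and lim: "a \<longlonglongrightarrow> 0"
    and d: "d > 1"
  shows "((\<exists>N. \<forall>m n. N \<le> m \<longrightarrow> m \<le> n \<longrightarrow> real m powr d * a m \<le> real n powr d * a n)
            \<longrightarrow> limsup (alpha a) \<le> ereal (zeta_d d))
       \<and> ((\<exists>N. \<forall>m n. N \<le> m \<longrightarrow> m \<le> n \<longrightarrow> real n powr d * a n \<le> real m powr d * a m)
            \<longrightarrow> liminf (alpha a) \<ge> ereal (zeta_d d))"
  using limsup_alpha_le_zeta_d[OF pos decr d] liminf_alpha_ge_zeta_d[OF pos decr lim d] by blast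

end
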